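(* Let $f:\mathbb R^n\to\mathbb R$ be continuously differentiable, and let $\{x^k\}$ be generated by a linesearch method $x^{k+1}=x^k+t_kd^k$ ($k\in\mathbb N$) with stepsizes $t_k\ge 0$ and directions $d^k\in\mathbb R^n$ such that: (a) $\{d^k\}$ is gradient associated with $\{x^k\}$; (b) $0$ is an accumulation point of $\{d^k\}$; (c) $\sum_{k=1}^\infty t_k\|d^k\|^2<\infty$. Then every accumulation point of $\{x^k\}$ is a stationary point of $f$ (i.e. $\nabla f(\bar x)=0$). Moreover, if $\{t_k\}$ is bounded from above, then: (i) if $\{x^k\}$ is bounded, the set of accumulation points of $\{x^k\}$ is nonempty, compact, and connected; (ii) if $\{x^k\}$ has an isolated accumulation point, then the whole sequence $\{x^k\}$ converges to it.
   Context: A direction sequence $\{d^k\}$ is called gradient associated with $\{x^k\}$ if for every infinite set $J\subset\mathbb N$, $d^k\to0$ as $k\to\infty,\ k\in J$ implies $\nabla f(x^k)\to 0$ as $k\to\infty,\ k\in J$. *)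

theory Defs
  imports "HOL-Analysis.Analysis"
begin

definition accum_point :: "(nat \<Rightarrow> 'a::topological_space) \<Rightarrow> 'a \<Rightarrow> bool" where
  "accum_point x a \<longleftrightarrow> (\<exists>r. strict_mono r \<and> (x \<circ> r) \<longlonglongrightarrow> a)"

text \<open>Gradient associated directions; gradf is the gradient of f.
  Limits along an infinite index set J use the filter sequentially restricted to J.\<close>
definition gradient_associated ::
  "('a::real_normed_vector \<Rightarrow> 'a) \<Rightarrow> (nat \<Rightarrow> 'a) \<Rightarrow> (nat \<Rightarrow> 'a) \<Rightarrow> bool" where
  "gradient_associated gradf d x \<longleftrightarrow>
     (\<forall>J::nat set. infinite J \<longrightarrow>
        (d \<longlongrightarrow> 0) (inf sequentially (principal J)) \<longrightarrow>
        ((\<lambda>k. gradf (x k)) \<longlongrightarrow> 0) (inf sequentially (principal J)))"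

end

theory Submission
  imports Defs
begin

(* Part 1. Suppose gradf a \<noteq> 0 at an accumulation point a. By continuity gradf stays away from 0
   on a ball around a, so, the directions being gradient associated, the d k stay away from 0
   (say \<ge> \<delta>) while x k is in that ball. There the step length t k * \<parallel>d k\<parallel> is at most
   t k * \<parallel>d k\<parallel>\<^sup>2 / \<delta>, a summable quantity, so once x comes close enough to a late enough it can
   never leave the ball. But along a subsequence with d \<rightarrow> 0 the gradients tend to 0, which is
   impossible inside the ball.

   Parts (i) and (ii) hold for every sequence with dist (x (Suc k)) (x k) \<rightarrow> 0, which bounded
   stepsizes force. The key point is that a real sequence with vanishing increments that passes
   infinitely often from below \<alpha> to above \<beta> visits [\<alpha>, \<beta>) infinitely often. Applied to the
   distance from an isolated accumulation point a, or from one part A1 of a separation of the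
   set of accumulation points, this produces a further accumulation point at a forbidden
   distance. *)

lemma ex_strict_mono_frequently:
  fixes P :: "nat \<Rightarrow> nat \<Rightarrow> bool"
  assumes "\<And>m. frequently (P m) sequentially"
  obtains s where "strict_mono s" "\<And>m. P m (s m)"
proof -
  obtain pick where pick: "\<And>m N. pick m N \<ge> N \<and> P m (pick m N)"
    using assms unfolding frequently_sequentially by metis
  define s where "s = rec_nat (pick 0 0) (\<lambda>m p. pick (Suc m) (Suc p))"
  have s0: "s 0 = pick 0 0" and sS: "\<And>m. s (Suc m) = pick (Suc m) (Suc (s m))"
    by (simp_all add: s_def)
  have "strict_mono s"
    unfolding strict_mono_Suc_iff using pick sS by (metis Suc_le_lessD)
  moreover have "P m (s m)" for m
    by (cases m) (use pick s0 sS in auto)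
  ultimately show thesis using that by blast
qed

lemma filtermap_sequentially_strict_mono:
  assumes "strict_mono s"
  shows "filtermap s sequentially = inf sequentially (principal (range s))"
proof (rule filter_eqI)
  fix P
  show "eventually P (filtermap s sequentially) \<longleftrightarrow> eventually P (inf sequentially (principal (range s)))"
    unfolding eventually_filtermap eventually_inf_principal
  proof
    assume "\<forall>\<^sub>F m in sequentially. P (s m)"
    then obtain M where M: "\<And>m. m \<ge> M \<Longrightarrow> P (s m)"
      unfolding eventually_sequentially by blast
    have "P k" if "s M \<le> k" "k \<in> range s" for k
      using that M strict_mono_less_eq[OF assms] by auto
    then show "\<forall>\<^sub>F k in sequentially. k \<in> range s \<longrightarrow> P k"
      unfolding eventually_sequentially by blast
  next
    assume "\<forall>\<^sub>F k in sequentially. k \<in> range s \<longrightarrow> P k"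
    from eventually_subseq[OF assms this] show "\<forall>\<^sub>F m in sequentially. P (s m)"
      by simp
  qed
qed

lemma ex_crossing_index:
  "\<not> Q m \<Longrightarrow> Q p \<Longrightarrow> m \<le> p \<Longrightarrow> \<exists>q\<ge>m. q < p \<and> \<not> Q q \<and> Q (Suc q)"
proof (induction p)
  case (Suc p)
  then show ?case
    by (cases "m = Suc p"; cases "Q p") (auto intro: less_SucI exI[of _ p])
qed simp

lemma frequently_between_if_small_increments:
  fixes u :: "nat \<Rightarrow> real"
  assumes below: "frequently (\<lambda>k. u k < \<alpha>) sequentially"
    and above: "frequently (\<lambda>k. \<beta> \<le> u k) sequentially"
    and small: "eventually (\<lambda>k. \<bar>u (Suc k) - u k\<bar> < \<beta> - \<alpha>) sequentially"
  shows "frequently (\<lambda>k. \<alpha> \<le> u k \<and> u k < \<beta>) sequentially"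
  unfolding frequently_sequentially
proof
  fix N
  obtain M where M: "\<And>k. k \<ge> M \<Longrightarrow> \<bar>u (Suc k) - u k\<bar> < \<beta> - \<alpha>"
    using small unfolding eventually_sequentially by blast
  obtain m where m: "m \<ge> max N M" "u m < \<alpha>"
    using below unfolding frequently_sequentially by blast
  obtain p where p: "p \<ge> m" "\<beta> \<le> u p"
    using above unfolding frequently_sequentially by blast
  have "\<alpha> < \<beta>" using M[of M] by linarith
  then obtain q where q: "q \<ge> m" "u q < \<alpha>" "\<alpha> \<le> u (Suc q)"
    using ex_crossing_index[of "\<lambda>k. \<alpha> \<le> u k" m p] m p by force
  then have "u (Suc q) < \<beta>" using M[of q] m by auto
  then show "\<exists>k\<ge>N. \<alpha> \<le> u k \<and> u k < \<beta>"
    using q m by (intro exI[of _ "Suc q"]) auto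
qed

lemma accum_point_iff_frequently:
  fixes x :: "nat \<Rightarrow> 'a::metric_space"
  shows "accum_point x a \<longleftrightarrow> (\<forall>e>0. frequently (\<lambda>k. dist (x k) a < e) sequentially)"
proof
  assume "accum_point x a"
  then obtain r where r: "strict_mono r" "(x \<circ> r) \<longlonglongrightarrow> a"
    unfolding accum_point_def by blast
  show "\<forall>e>0. frequently (\<lambda>k. dist (x k) a < e) sequentially"
    unfolding frequently_sequentially
  proof (intro allI impI)
    fix e :: real and N assume "e > 0"
    then obtain M where M: "\<And>m. m \<ge> M \<Longrightarrow> dist (x (r m)) a < e"
      using r(2) unfolding tendsto_iff eventually_sequentially by auto
    show "\<exists>k\<ge>N. dist (x k) a < e"
      using M[of "max M N"] seq_suble[OF r(1), of "max M N"] by (intro exI[of _ "r (max M N)"]) auto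
  qed
next
  assume "\<forall>e>0. frequently (\<lambda>k. dist (x k) a < e) sequentially"
  then have "frequently (\<lambda>k. dist (x k) a < 1 / Suc m) sequentially" for m
    by simp
  then obtain s :: "nat \<Rightarrow> nat" where s: "strict_mono s" "\<And>m. dist (x (s m)) a < 1 / Suc m"
    using ex_strict_mono_frequently[of "\<lambda>m k. dist (x k) a < 1 / Suc m"] by blast
  have "(\<lambda>m. dist (x (s m)) a) \<longlonglongrightarrow> 0"
    by (rule Lim_null_comparison[OF _ LIMSEQ_Suc[OF lim_inverse_n']])
      (use s(2) in \<open>simp add: less_imp_le inverse_eq_divide\<close>)
  then show "accum_point x a"
    unfolding accum_point_def using s(1) tendsto_dist_iff[of "x \<circ> s"] by (auto simp: o_def)
qed

lemma accum_point_subseq: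
  assumes "strict_mono s" "accum_point (x \<circ> s) b"
  shows "accum_point x b"
  using assms strict_mono_o unfolding accum_point_def by (metis comp_assoc)

lemma accum_point_in_compact_if_frequently:
  fixes x :: "nat \<Rightarrow> 'a::metric_space"
  assumes "compact K" "frequently (\<lambda>k. x k \<in> K) sequentially"
  obtains b where "b \<in> K" "accum_point x b"
proof -
  obtain s :: "nat \<Rightarrow> nat" where s: "strict_mono s" "\<And>m. x (s m) \<in> K"
    using ex_strict_mono_frequently[of "\<lambda>_ k. x k \<in> K"] assms(2) by blast
  obtain b r where "b \<in> K" "strict_mono r" "((x \<circ> s) \<circ> r) \<longlonglongrightarrow> b"
    using seq_compactE[OF compact_imp_seq_compact[OF assms(1)], of "x \<circ> s"] s(2) by auto
  then show thesis
    using that accum_point_subseq[OF s(1)] unfolding accum_point_def by blast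
qed

lemma accum_points_eq_Inter_closure:
  fixes x :: "nat \<Rightarrow> 'a::metric_space"
  shows "{a. accum_point x a} = (\<Inter>N. closure (x ` {N..}))"
proof -
  have "accum_point x a \<longleftrightarrow> (\<forall>N. \<forall>e>0. \<exists>k\<ge>N. dist (x k) a < e)" for a
    unfolding accum_point_iff_frequently frequently_sequentially by blast
  also have "\<dots> a \<longleftrightarrow> (\<forall>N. a \<in> closure (x ` {N..}))" for a
    unfolding closure_approachable by (simp add: dist_commute Bex_def)
  finally show ?thesis by blast
qed

lemma compact_accum_points:
  fixes x :: "nat \<Rightarrow> 'a::heine_borel"
  assumes "bounded (range x)"
  shows "compact {a. accum_point x a}"
proof -
  have "{a. accum_point x a} \<subseteq> closure (x ` {0..})"
    unfolding accum_points_eq_Inter_closure by (rule INT_lower) simp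
  then have "{a. accum_point x a} \<subseteq> closure (range x)"
    by simp
  then have "bounded {a. accum_point x a}"
    using bounded_closure[OF assms] bounded_subset by blast
  moreover have "closed {a. accum_point x a}"
    unfolding accum_points_eq_Inter_closure by (simp add: closed_INT)
  ultimately show ?thesis
    by (simp add: compact_eq_bounded_closed)
qed

lemma LIMSEQ_isolated_accum_point:
  fixes x :: "nat \<Rightarrow> 'a::heine_borel"
  assumes steps: "(\<lambda>k. dist (x (Suc k)) (x k)) \<longlonglongrightarrow> 0"
    and acc: "accum_point x a" and "e > 0"
    and iso: "\<And>b. accum_point x b \<Longrightarrow> dist b a < e \<Longrightarrow> b = a"
  shows "x \<longlonglongrightarrow> a"
proof (rule ccontr)
  assume "\<not> x \<longlonglongrightarrow> a"
  then obtain \<epsilon> where "\<epsilon> > 0" and "\<not> eventually (\<lambda>k. dist (x k) a < \<epsilon>) sequentially"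
    unfolding tendsto_iff by blast
  then have far: "frequently (\<lambda>k. \<epsilon> \<le> dist (x k) a) sequentially"
    by (simp add: not_eventually not_less)
  define \<eta> where "\<eta> = min \<epsilon> (e/2)"
  have \<eta>: "\<eta> > 0" "\<eta> \<le> \<epsilon>" "\<eta> < e" using \<open>\<epsilon> > 0\<close> \<open>e > 0\<close> by (auto simp: \<eta>_def)
  have "frequently (\<lambda>k. \<eta>/2 \<le> dist (x k) a \<and> dist (x k) a < \<eta>) sequentially"
  proof (rule frequently_between_if_small_increments)
    show "frequently (\<lambda>k. dist (x k) a < \<eta>/2) sequentially"
      using acc \<eta>(1) unfolding accum_point_iff_frequently by (meson half_gt_zero)
    show "frequently (\<lambda>k. \<eta> \<le> dist (x k) a) sequentially"
      using far by (rule frequently_mono[rotated]) (use \<eta>(2) in auto)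
    have "eventually (\<lambda>k. dist (x (Suc k)) (x k) < \<eta>/2) sequentially"
      by (rule order_tendstoD(2)[OF steps]) (use \<eta>(1) in simp)
    then show "eventually (\<lambda>k. \<bar>dist (x (Suc k)) a - dist (x k) a\<bar> < \<eta> - \<eta>/2) sequentially"
    proof (rule eventually_mono)
      fix k assume "dist (x (Suc k)) (x k) < \<eta>/2"
      then show "\<bar>dist (x (Suc k)) a - dist (x k) a\<bar> < \<eta> - \<eta>/2"
        using abs_dist_diff_le[of "x (Suc k)" a "x k"] by (simp add: dist_commute)
    qed
  qed
  then have "frequently (\<lambda>k. x k \<in> cball a \<eta> - ball a (\<eta>/2)) sequentially"
    by (rule frequently_mono[rotated]) (auto simp: dist_commute)
  then obtain b where "b \<in> cball a \<eta> - ball a (\<eta>/2)" "accum_point x b"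
    using accum_point_in_compact_if_frequently[OF compact_diff[OF compact_cball open_ball]] by blast
  then show False
    using iso \<eta> by (force simp: dist_commute)
qed

lemma frequently_between_if_Lipschitz_accum_points:
  fixes x :: "nat \<Rightarrow> 'a::metric_space" and \<phi> :: "'a \<Rightarrow> real"
  assumes steps: "(\<lambda>k. dist (x (Suc k)) (x k)) \<longlonglongrightarrow> 0"
    and Lipschitz: "\<And>y z. \<bar>\<phi> y - \<phi> z\<bar> \<le> dist y z"
    and acc: "accum_point x a1" "accum_point x a2"
    and "\<phi> a1 < \<alpha>" "\<alpha> < \<beta>" "\<beta> < \<phi> a2"
  shows "frequently (\<lambda>k. \<alpha> \<le> \<phi> (x k) \<and> \<phi> (x k) < \<beta>) sequentially"
proof (rule frequently_between_if_small_increments)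
  have "frequently (\<lambda>k. dist (x k) a1 < \<alpha> - \<phi> a1) sequentially"
    using acc(1) \<open>\<phi> a1 < \<alpha>\<close> unfolding accum_point_iff_frequently by simp
  then show "frequently (\<lambda>k. \<phi> (x k) < \<alpha>) sequentially"
  proof (rule frequently_elim1)
    fix k assume "dist (x k) a1 < \<alpha> - \<phi> a1"
    then show "\<phi> (x k) < \<alpha>" using abs_le_D1[OF Lipschitz[of "x k" a1]] by linarith
  qed
  have "frequently (\<lambda>k. dist (x k) a2 < \<phi> a2 - \<beta>) sequentially"
    using acc(2) \<open>\<beta> < \<phi> a2\<close> unfolding accum_point_iff_frequently by simp
  then show "frequently (\<lambda>k. \<beta> \<le> \<phi> (x k)) sequentially"
  proof (rule frequently_elim1)
    fix k assume "dist (x k) a2 < \<phi> a2 - \<beta>"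
    then show "\<beta> \<le> \<phi> (x k)" using abs_le_D2[OF Lipschitz[of "x k" a2]] by linarith
  qed
  have "eventually (\<lambda>k. dist (x (Suc k)) (x k) < \<beta> - \<alpha>) sequentially"
    by (rule order_tendstoD(2)[OF steps]) (use \<open>\<alpha> < \<beta>\<close> in simp)
  then show "eventually (\<lambda>k. \<bar>\<phi> (x (Suc k)) - \<phi> (x k)\<bar> < \<beta> - \<alpha>) sequentially"
    by (rule eventually_mono) (use Lipschitz le_less_trans in blast)
qed

lemma connected_accum_points:
  fixes x :: "nat \<Rightarrow> 'a::heine_borel"
  assumes steps: "(\<lambda>k. dist (x (Suc k)) (x k)) \<longlonglongrightarrow> 0"
    and bdd: "bounded (range x)"
  shows "connected {a. accum_point x a}"
proof -
  define A where "A = {a. accum_point x a}"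
  have "compact A" unfolding A_def using bdd by (rule compact_accum_points)
  have "False" if cl: "closed A1" "closed A2" and ne: "A1 \<noteq> {}" "A2 \<noteq> {}"
    and un: "A1 \<union> A2 = A" and dis: "A1 \<inter> A2 = {}" for A1 A2
  proof -
    have "compact A2"
      using compact_Int_closed[OF \<open>compact A\<close> cl(2)] un by (metis Int_absorb1 sup.cobounded2)
    define D where "D = setdist A2 A1"
    have "D > 0"
      unfolding D_def using setdist_gt_0_compact_closed[OF \<open>compact A2\<close> cl(1)] ne dis by auto
    obtain a1 a2 where a: "a1 \<in> A1" "a2 \<in> A2" using ne by blast
    have "D \<le> setdist {a2} A1" unfolding D_def using a(2) by (rule setdist_le_sing)
    moreover have acc: "accum_point x a1" "accum_point x a2" using a un unfolding A_def by auto
    ultimately have "frequently (\<lambda>k. D/3 \<le> setdist {x k} A1 \<and> setdist {x k} A1 < 2*D/3) sequentially"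
      using \<open>D > 0\<close> a(1)
      by (intro frequently_between_if_Lipschitz_accum_points[OF steps setdist_Lipschitz acc])
        (simp_all add: setdist_sing_in_set)
    define K where "K = closure (range x) \<inter> {y. D/3 \<le> setdist {y} A1 \<and> setdist {y} A1 \<le> 2*D/3}"
    have "frequently (\<lambda>k. x k \<in> K) sequentially"
      using \<open>frequently _ sequentially\<close>
      by (rule frequently_mono[rotated]) (use closure_subset[of "range x"] in \<open>auto simp: K_def\<close>)
    moreover have "compact K"
      unfolding K_def using bdd
      by (intro compact_Int_closed closed_Collect_conj closed_Collect_le continuous_on_setdist continuous_on_const) simp_all
    ultimately obtain b where "b \<in> K" "accum_point x b"
      using accum_point_in_compact_if_frequently by blast
    then have b: "D/3 \<le> setdist {b} A1" "setdist {b} A1 \<le> 2*D/3" "b \<in> A"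
      unfolding K_def A_def by auto
    show False
    proof (cases "b \<in> A1")
      case True
      then show False using b(1) \<open>D > 0\<close> by (simp add: setdist_sing_in_set)
    next
      case False
      then have "D \<le> setdist {b} A1" using b(3) un unfolding D_def by (auto intro: setdist_le_sing)
      then show False using b(2) \<open>D > 0\<close> by linarith
    qed
  qed
  moreover have "closed A" using \<open>compact A\<close> by (rule compact_imp_closed)
  ultimately show ?thesis
    unfolding A_def[symmetric] using connected_closed_set by metis
qed

lemma gradient_associated_subseq:
  assumes "gradient_associated gradf d x" "strict_mono s" "(d \<circ> s) \<longlonglongrightarrow> 0"
  shows "(\<lambda>m. gradf (x (s m))) \<longlonglongrightarrow> 0"
proof -
  note restrict = filtermap_sequentially_strict_mono[OF assms(2), symmetric]
  have "infinite (range s)"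
    using range_inj_infinite strict_mono_imp_inj_on[OF assms(2)] by blast
  moreover have "(d \<longlongrightarrow> 0) (inf sequentially (principal (range s)))"
    unfolding restrict filterlim_filtermap using assms(3) by (simp add: o_def)
  ultimately have "((\<lambda>k. gradf (x k)) \<longlongrightarrow> 0) (inf sequentially (principal (range s)))"
    using assms(1) unfolding gradient_associated_def by blast
  then show ?thesis
    unfolding restrict filterlim_filtermap .
qed

lemma gradient_associated_directions_bounded_below:
  fixes gradf :: "'a::real_normed_vector \<Rightarrow> 'a"
  assumes ga: "gradient_associated gradf d x" and "c > 0"
    and grad_big: "\<And>y. dist y a < \<rho> \<Longrightarrow> c \<le> norm (gradf y)"
  shows "\<exists>\<delta>>0. eventually (\<lambda>k. dist (x k) a < \<rho> \<longrightarrow> \<delta> \<le> norm (d k)) sequentially"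
proof (rule ccontr)
  assume "\<not> ?thesis"
  then have "\<not> eventually (\<lambda>k. dist (x k) a < \<rho> \<longrightarrow> 1 / Suc m \<le> norm (d k)) sequentially" for m
    by simp
  then have "frequently (\<lambda>k. dist (x k) a < \<rho> \<and> norm (d k) < 1 / Suc m) sequentially" for m
    unfolding not_eventually by (simp add: not_le)
  then obtain s :: "nat \<Rightarrow> nat" where s: "strict_mono s"
    "\<And>m. dist (x (s m)) a < \<rho> \<and> norm (d (s m)) < 1 / Suc m"
    using ex_strict_mono_frequently[of "\<lambda>m k. dist (x k) a < \<rho> \<and> norm (d k) < 1 / Suc m"] by blast
  have "(d \<circ> s) \<longlonglongrightarrow> 0"
    by (rule LIMSEQ_norm_0) (use s(2) in \<open>simp add: less_imp_le\<close>)
  then have "(\<lambda>m. norm (gradf (x (s m)))) \<longlonglongrightarrow> 0"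
    unfolding tendsto_norm_zero_iff by (rule gradient_associated_subseq[OF ga s(1)])
  then have "eventually (\<lambda>m. norm (gradf (x (s m))) < c) sequentially"
    using \<open>c > 0\<close> by (rule order_tendstoD(2))
  then obtain m where "norm (gradf (x (s m))) < c"
    using eventually_happens'[OF sequentially_bot] by blast
  then show False
    using grad_big s(2)[of m] by fastforce
qed

text \<open>Near an accumulation point the path can only leave the \<open>\<rho>\<close>-ball by moving a distance
  of at least \<open>\<rho>/2\<close> with local steps, which a small tail of a convergent series forbids.\<close>
lemma eventually_near_accum_point_if_local_steps_summable:
  fixes x :: "nat \<Rightarrow> 'a::metric_space"
  assumes acc: "accum_point x a" and "\<rho> > 0" and "summable c"
    and local_steps: "eventually (\<lambda>k. dist (x k) a < \<rho> \<longrightarrow> dist (x (Suc k)) (x k) \<le> c k) sequentially"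
  shows "eventually (\<lambda>k. dist (x k) a < \<rho>) sequentially"
proof -
  obtain N where N: "\<And>k. k \<ge> N \<Longrightarrow> dist (x k) a < \<rho> \<Longrightarrow> dist (x (Suc k)) (x k) \<le> c k"
    using local_steps unfolding eventually_sequentially by blast
  obtain M where M: "\<And>m n. m \<ge> M \<Longrightarrow> norm (sum c {m..<n}) < \<rho>/2"
    using \<open>summable c\<close> \<open>\<rho> > 0\<close> unfolding summable_Cauchy by (meson half_gt_zero)
  obtain m where m: "m \<ge> max M N" "dist (x m) a < \<rho>/2"
    using acc \<open>\<rho> > 0\<close> unfolding accum_point_iff_frequently frequently_sequentially by (meson half_gt_zero)
  have tail: "sum c {m..<p} < \<rho>/2" for p
    using M[of m p] m(1) by auto
  have "dist (x p) a \<le> dist (x m) a + sum c {m..<p}" if "m \<le> p" for p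
    using that
  proof (induction p rule: dec_induct)
    case (step p)
    have "dist (x p) a < \<rho>" using step.IH tail[of p] m(2) by linarith
    then have "dist (x (Suc p)) (x p) \<le> c p" using N step.hyps m(1) by auto
    then show ?case using step.IH step.hyps dist_triangle[of "x (Suc p)" a "x p"] by simp
  qed simp
  then have "dist (x p) a < \<rho>" if "m \<le> p" for p
    using that tail[of p] m(2) by fastforce
  then show ?thesis
    unfolding eventually_sequentially by blast
qed

lemma isCont_half_norm_le_near:
  fixes f :: "'a::metric_space \<Rightarrow> 'b::real_normed_vector"
  assumes "isCont f a"
  obtains \<rho> where "\<rho> > 0" "\<And>y. dist y a < \<rho> \<Longrightarrow> norm (f a) / 2 \<le> norm (f y)"
proof (cases "f a = 0")
  case False
  then obtain \<rho> where "\<rho> > 0" and \<rho>: "\<And>y. dist y a < \<rho> \<Longrightarrow> dist (f y) (f a) < norm (f a) / 2"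
    using assms unfolding continuous_at_eps_delta by (meson half_gt_zero zero_less_norm_iff)
  have "norm (f a) / 2 \<le> norm (f y)" if "dist y a < \<rho>" for y
    using \<rho>[OF that] norm_triangle_ineq2[of "f a" "f y"] by (simp add: dist_norm norm_minus_commute)
  with \<open>\<rho> > 0\<close> show thesis using that by blast
qed (use that in \<open>auto intro: zero_less_one\<close>)

lemma dist_add_scaleR_le:
  fixes v :: "'a::real_normed_vector"
  assumes "t \<ge> 0" "\<delta> > 0" "\<delta> \<le> norm v"
  shows "dist (y + t *\<^sub>R v) y \<le> t * (norm v)\<^sup>2 / \<delta>"
proof -
  have "t * norm v * \<delta> \<le> t * norm v * norm v"
    using assms by (intro mult_left_mono) simp_all
  then show ?thesis
    using assms by (simp add: dist_norm pos_le_divide_eq power2_eq_square mult.assoc)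
qed

lemma gradient_zero_at_accum_point:
  fixes gradf :: "'a::real_normed_vector \<Rightarrow> 'a"
  assumes C1: "continuous_on UNIV gradf"
    and step: "\<And>k. x (Suc k) = x k + t k *\<^sub>R d k"
    and t_nonneg: "\<And>k. t k \<ge> 0"
    and ga: "gradient_associated gradf d x"
    and d_acc: "accum_point d 0"
    and summ: "summable (\<lambda>k. t k * (norm (d k))\<^sup>2)"
    and acc: "accum_point x a"
  shows "gradf a = 0"
proof (rule ccontr)
  assume "gradf a \<noteq> 0"
  define g where "g = norm (gradf a)"
  have "g > 0" using \<open>gradf a \<noteq> 0\<close> by (simp add: g_def)
  have "isCont gradf a"
    using C1 by (simp add: continuous_on_eq_continuous_at)
  then obtain \<rho> where "\<rho> > 0" and grad_big: "\<And>y. dist y a < \<rho> \<Longrightarrow> g/2 \<le> norm (gradf y)"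
    using isCont_half_norm_le_near unfolding g_def by blast
  obtain \<delta> where "\<delta> > 0"
    and d_big: "eventually (\<lambda>k. dist (x k) a < \<rho> \<longrightarrow> \<delta> \<le> norm (d k)) sequentially"
    using gradient_associated_directions_bounded_below[OF ga _ grad_big] \<open>g > 0\<close> by auto
  have "dist (x (Suc k)) (x k) \<le> t k * (norm (d k))\<^sup>2 / \<delta>" if "\<delta> \<le> norm (d k)" for k
    unfolding step using t_nonneg \<open>\<delta> > 0\<close> that by (rule dist_add_scaleR_le)
  with d_big have "eventually (\<lambda>k. dist (x k) a < \<rho> \<longrightarrow>
      dist (x (Suc k)) (x k) \<le> t k * (norm (d k))\<^sup>2 / \<delta>) sequentially"
    by (simp add: eventually_mono)
  with acc \<open>\<rho> > 0\<close> summable_divide[OF summ]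
  have near: "eventually (\<lambda>k. dist (x k) a < \<rho>) sequentially"
    by (rule eventually_near_accum_point_if_local_steps_summable)
  obtain r where r: "strict_mono r" "(d \<circ> r) \<longlonglongrightarrow> 0"
    using d_acc unfolding accum_point_def by blast
  have "(\<lambda>m. norm (gradf (x (r m)))) \<longlonglongrightarrow> 0"
    unfolding tendsto_norm_zero_iff by (rule gradient_associated_subseq[OF ga r])
  then have "eventually (\<lambda>m. norm (gradf (x (r m))) < g/2) sequentially"
    by (rule order_tendstoD(2)) (use \<open>g > 0\<close> in simp)
  moreover have "eventually (\<lambda>m. g/2 \<le> norm (gradf (x (r m)))) sequentially"
    using eventually_subseq[OF r(1) near] by (rule eventually_mono) (rule grad_big)
  ultimately have "eventually (\<lambda>m. False) sequentially"
    by eventually_elim linarith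
  then show False by simp
qed

lemma dist_Suc_tendsto_zero_if_bounded_steps:
  fixes x d :: "nat \<Rightarrow> 'a::real_normed_vector"
  assumes step: "\<And>k. x (Suc k) = x k + t k *\<^sub>R d k"
    and t_nonneg: "\<And>k. t k \<ge> 0" and t_bounded: "\<And>k. t k \<le> T"
    and summ: "summable (\<lambda>k. t k * (norm (d k))\<^sup>2)"
  shows "(\<lambda>k. dist (x (Suc k)) (x k)) \<longlonglongrightarrow> 0"
proof (rule Lim_null_comparison[OF always_eventually])
  have "(\<lambda>k. t k * (norm (d k))\<^sup>2) \<longlonglongrightarrow> 0"
    using summ by (rule summable_LIMSEQ_zero)
  then have "(\<lambda>k. sqrt (T * (t k * (norm (d k))\<^sup>2))) \<longlonglongrightarrow> sqrt (T * 0)"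
    by (intro tendsto_real_sqrt tendsto_mult tendsto_const)
  then show "(\<lambda>k. sqrt (T * (t k * (norm (d k))\<^sup>2))) \<longlonglongrightarrow> 0"
    by simp
  show "\<forall>k. norm (dist (x (Suc k)) (x k)) \<le> sqrt (T * (t k * (norm (d k))\<^sup>2))"
  proof
    fix k
    have "(dist (x (Suc k)) (x k))\<^sup>2 = t k * (t k * (norm (d k))\<^sup>2)"
      using t_nonneg[of k] by (simp add: step dist_norm power2_eq_square)
    also have "\<dots> \<le> T * (t k * (norm (d k))\<^sup>2)"
      using t_bounded t_nonneg by (intro mult_right_mono) simp_all
    finally show "norm (dist (x (Suc k)) (x k)) \<le> sqrt (T * (t k * (norm (d k))\<^sup>2))"
      by (simp add: real_le_rsqrt)
  qed
qed

theorem mainTheorem2: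
  fixes f :: "real ^ 'n \<Rightarrow> real"
    and gradf :: "real ^ 'n \<Rightarrow> real ^ 'n"
    and x d :: "nat \<Rightarrow> real ^ 'n"
    and t :: "nat \<Rightarrow> real"
  assumes grad: "\<And>y. GDERIV f y :> gradf y"
    and C1: "continuous_on UNIV gradf"
    and step: "\<And>k. x (Suc k) = x k + t k *\<^sub>R d k"
    and t_nonneg: "\<And>k. t k \<ge> 0"
    and ga: "gradient_associated gradf d x"
    and d_acc: "accum_point d 0"
    and summ: "summable (\<lambda>k. t k * (norm (d k))\<^sup>2)"
  shows "(\<forall>a. accum_point x a \<longrightarrow> gradf a = 0)
    \<and> ((\<exists>T. \<forall>k. t k \<le> T) \<longrightarrow>
        (bounded (range x) \<longrightarrow>
           {a. accum_point x a} \<noteq> {} \<and> compact {a. accum_point x a}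
           \<and> connected {a. accum_point x a})
      \<and> (\<forall>a. accum_point x a \<and> (\<exists>e>0. \<forall>b. accum_point x b \<and> dist b a < e \<longrightarrow> b = a)
             \<longrightarrow> x \<longlonglongrightarrow> a))"
proof (intro conjI allI impI)
  fix a assume "accum_point x a"
  then show "gradf a = 0"
    by (rule gradient_zero_at_accum_point[OF C1 step t_nonneg ga d_acc summ])
next
  assume "\<exists>T. \<forall>k. t k \<le> T"
  then obtain T where "\<And>k. t k \<le> T" by blast
  then have steps: "(\<lambda>k. dist (x (Suc k)) (x k)) \<longlonglongrightarrow> 0"
    using dist_Suc_tendsto_zero_if_bounded_steps[OF step t_nonneg _ summ] by blast
  {
    assume bdd: "bounded (range x)"
    then show "{a. accum_point x a} \<noteq> {}"
      using bounded_imp_convergent_subsequence unfolding accum_point_def by blast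
    show "compact {a. accum_point x a}" using bdd by (rule compact_accum_points)
    show "connected {a. accum_point x a}" using steps bdd by (rule connected_accum_points)
  }
  fix a assume "accum_point x a \<and> (\<exists>e>0. \<forall>b. accum_point x b \<and> dist b a < e \<longrightarrow> b = a)"
  then show "x \<longlonglongrightarrow> a"
    using LIMSEQ_isolated_accum_point[OF steps] by blast
qed

end
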